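(* Let $\succ=(\succ_s)_{s\in S}$ be a priority profile with every $\succ_s$ a partial order on $I$, and let $\mu_1,\dots,\mu_K$ ($K\ge1$) be stable matchings for $\succ$ such that $\mu_{k'}$ Pareto dominates $\mu_k$ for all $1\le k<k'\le K$. For each $k$ and $s\in S$ let $A_s^k=\{(i,j)\in I\times I:\ \mu_k(i)=s\ \text{and}\ sP_j\mu_k(j)\}$, and let $\succ'_s=\succ_s\cup\bigcup_{k=1}^K A_s^k$. Then for every $s\in S$, $\succ'_s$ is asymmetric and acyclic.
   Context: A binary relation $B$ on $X$ is asymmetric if $(x,y)\in B$ implies $(y,x)\notin B$; transitive if $(x,y),(y,z)\in B$ imply $(x,z)\in B$; acyclic if for all $K\ge2$ and $x_0,\dots,x_K\in X$, [$(x_{k-1},x_k)\in B$ and $(x_k,x_{k-1})\notin B$ for all $k$] implies $(x_K,x_0)\notin B$. A partial order is an asymmetric transitive relation. School choice setup: $I$ is a finite set of students with $|I|\ge 3$, $S$ a finite set of schools. Each student $i$ has a total order $P_i$ on $S\cup\{\emptyset\}$; $sR_is'$ means $sP_is'$ or $s=s'$. Each school $s$ has capacity $q_s\in\mathbb{Z}_{++}$ and an asymmetric priority relation $\succ_s$ on $I$. A matching $\mu$ assigns each $i$ to $\mu(i)\in S\cup\{\emptyset\}$, $\mu(s)=\{i:\mu(i)=s\}$, $|\mu(s)|\le q_s$. $\mu$ is stable for $\succ$ if it is individually rational ($\mu(i)R_i\emptyset$ for all $i$), non-wasteful ($sP_i\mu(i)$ implies $|\mu(s)|=q_s$) and fair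 (no $s$, $j\in\mu(s)$, $i\notin\mu(s)$ with $sR_i\mu(i)$ and $(i,j)\in\succ_s$). $\mu$ is Pareto dominated by $\mu'$ if $\mu'(i)R_i\mu(i)$ for all $i$ and $\mu'(i)P_i\mu(i)$ for some $i$. *)

theory Defs
  imports Main
begin

definition asym_on :: "'a set \<Rightarrow> ('a \<times> 'a) set \<Rightarrow> bool" where
  "asym_on X B \<longleftrightarrow> (\<forall>x\<in>X. \<forall>y\<in>X. (x,y) \<in> B \<longrightarrow> (y,x) \<notin> B)"

definition trans_on :: "'a set \<Rightarrow> ('a \<times> 'a) set \<Rightarrow> bool" where
  "trans_on X B \<longleftrightarrow> (\<forall>x\<in>X. \<forall>y\<in>X. \<forall>z\<in>X. (x,y) \<in> B \<longrightarrow> (y,z) \<in> B \<longrightarrow> (x,z) \<in> B)"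

definition acyclic_on :: "'a set \<Rightarrow> ('a \<times> 'a) set \<Rightarrow> bool" where
  "acyclic_on X B \<longleftrightarrow> (\<forall>K::nat. \<forall>x::nat \<Rightarrow> 'a. K \<ge> 2 \<longrightarrow> (\<forall>k\<le>K. x k \<in> X) \<longrightarrow>
      (\<forall>k\<in>{1..K}. (x (k-1), x k) \<in> B \<and> (x k, x (k-1)) \<notin> B) \<longrightarrow> (x K, x 0) \<notin> B)"

definition partial_order_on' :: "'a set \<Rightarrow> ('a \<times> 'a) set \<Rightarrow> bool" where
  "partial_order_on' X B \<longleftrightarrow> asym_on X B \<and> trans_on X B"

definition strict_total_order_on :: "'a set \<Rightarrow> ('a \<times> 'a) set \<Rightarrow> bool" where
  "strict_total_order_on X B \<longleftrightarrow> B \<subseteq> X \<times> X \<and> irrefl_on X B \<and> trans_on X B \<and>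
      (\<forall>x\<in>X. \<forall>y\<in>X. x \<noteq> y \<longrightarrow> (x,y) \<in> B \<or> (y,x) \<in> B)"

(* Outside option \<emptyset> is represented by None; school s by Some s.
   P i is the strict preference of student i on S \<union> {\<emptyset>}: (a,b) \<in> P i means a P_i b. *)
type_synonym ('i,'s) matching = "'i \<Rightarrow> 's option"

definition R :: "('i \<Rightarrow> ('s option \<times> 's option) set) \<Rightarrow> 'i \<Rightarrow> 's option \<Rightarrow> 's option \<Rightarrow> bool" where
  "R P i a b \<longleftrightarrow> (a,b) \<in> P i \<or> a = b"

definition is_matching :: "'i set \<Rightarrow> 's set \<Rightarrow> ('s \<Rightarrow> nat) \<Rightarrow> ('i,'s) matching \<Rightarrow> bool" where
  "is_matching I S q \<mu> \<longleftrightarrow> (\<forall>i\<in>I. \<mu> i = None \<or> (\<exists>s\<in>S. \<mu> i = Some s)) \<and>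
      (\<forall>s\<in>S. card {i\<in>I. \<mu> i = Some s} \<le> q s)"

definition stable :: "'i set \<Rightarrow> 's set \<Rightarrow> ('i \<Rightarrow> ('s option \<times> 's option) set) \<Rightarrow> ('s \<Rightarrow> nat)
    \<Rightarrow> ('s \<Rightarrow> ('i \<times> 'i) set) \<Rightarrow> ('i,'s) matching \<Rightarrow> bool" where
  "stable I S P q prio \<mu> \<longleftrightarrow> is_matching I S q \<mu> \<and>
     (\<forall>i\<in>I. R P i (\<mu> i) None) \<and>
     (\<forall>i\<in>I. \<forall>s\<in>S. (Some s, \<mu> i) \<in> P i \<longrightarrow> card {j\<in>I. \<mu> j = Some s} = q s) \<and>
     (\<not> (\<exists>s\<in>S. \<exists>j\<in>I. \<exists>i\<in>I. \<mu> j = Some s \<and> \<mu> i \<noteq> Some s \<and> R P i (Some s) (\<mu> i) \<and> (i,j) \<in> prio s))"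

definition pareto_dominates :: "'i set \<Rightarrow> ('i \<Rightarrow> ('s option \<times> 's option) set)
    \<Rightarrow> ('i,'s) matching \<Rightarrow> ('i,'s) matching \<Rightarrow> bool" where
  "pareto_dominates I P \<mu>' \<mu> \<longleftrightarrow> (\<forall>i\<in>I. R P i (\<mu>' i) (\<mu> i)) \<and> (\<exists>i\<in>I. (\<mu>' i, \<mu> i) \<in> P i)"

definition A_set :: "'i set \<Rightarrow> ('i \<Rightarrow> ('s option \<times> 's option) set) \<Rightarrow> ('i,'s) matching \<Rightarrow> 's \<Rightarrow> ('i \<times> 'i) set" where
  "A_set I P \<mu> s = {(i,j). i \<in> I \<and> j \<in> I \<and> \<mu> i = Some s \<and> (Some s, \<mu> j) \<in> P j}"

end

theory Submission
  imports Defs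
begin

text \<open>Fix a school s. Every path of the extended priority either is a priority chain or
  leads from a student weakly above someone assigned to s in some \<mu>_kf to a student weakly below
  someone who prefers s to his assignment in some \<mu>_kl with kf \<le> kl. The path invariant is
  preserved because Pareto domination makes the set of students preferring s shrink with k, and
  fairness forbids a student preferring s in \<mu>_k to have weakly higher priority than one assigned
  to s in \<mu>_k; so an envy edge at stage k can only follow a last envy stage kl < k. A cycle
  would give exactly such a forbidden pair at stage kf, hence the transitive closure is
  irreflexive.\<close>

lemma trancl_of_chain:
  fixes n :: nat
  assumes "\<forall>k\<in>{1..n}. (x (k - 1), x k) \<in> B" and "1 \<le> n"
  shows "(x 0, x n) \<in> B\<^sup>+"
  using assms
proof (induction n)
  case 0
  then show ?case by simp
next
  case (Suc n)
  then have edge: "(x n, x (Suc n)) \<in> B"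
    by (metis atLeastAtMost_iff diff_Suc_1 le_add1 order_refl plus_1_eq_Suc)
  show ?case
  proof (cases "n = 0")
    case True
    then show ?thesis using edge by auto
  next
    case False
    then have "(x 0, x n) \<in> B\<^sup>+" using Suc by simp
    then show ?thesis using edge by simp
  qed
qed

lemma acyclic_imp_asym_on: "acyclic B \<Longrightarrow> asym_on X B"
  unfolding asym_on_def acyclic_def by (meson r_into_trancl' trancl_into_trancl)

lemma acyclic_imp_acyclic_on: "acyclic B \<Longrightarrow> acyclic_on X B"
  unfolding acyclic_on_def
proof (intro allI impI)
  fix n :: nat and x :: "nat \<Rightarrow> 'a"
  assume "acyclic B" "2 \<le> n"
    and "\<forall>k\<in>{1..n}. (x (k - 1), x k) \<in> B \<and> (x k, x (k - 1)) \<notin> B"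
  then have "(x 0, x n) \<in> B\<^sup>+" by (intro trancl_of_chain) auto
  with \<open>acyclic B\<close> show "(x n, x 0) \<notin> B"
    unfolding acyclic_def by (meson trancl_into_trancl)
qed

text \<open>Abstract form of one school s: Q is its priority, and at stage k the students in M k
  are assigned to s while those in E k prefer s to their assignment.\<close>

locale staged_envy =
  fixes Q :: "'a rel" and J :: "'k::linorder set" and M E :: "'k \<Rightarrow> 'a set"
  assumes trans_Q: "trans Q" and irrefl_Q: "irrefl Q"
    and envy_antimono: "\<lbrakk>k \<in> J; k' \<in> J; k \<le> k'\<rbrakk> \<Longrightarrow> E k' \<subseteq> E k"
    and fair: "\<lbrakk>k \<in> J; z \<in> M k; (w, z) \<in> Q\<^sup>=\<rbrakk> \<Longrightarrow> w \<notin> E k"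
begin

definition edges :: "'a rel" where
  "edges = Q \<union> (\<Union>k\<in>J. M k \<times> E k)"

definition envy_path :: "'a \<Rightarrow> 'a \<Rightarrow> bool" where
  "envy_path u v \<longleftrightarrow> (\<exists>kf\<in>J. \<exists>kl\<in>J. kf \<le> kl \<and>
     (\<exists>w'\<in>M kf. (u, w') \<in> Q\<^sup>=) \<and> (\<exists>w\<in>E kl. (w, v) \<in> Q\<^sup>=))"

lemma reflcl_Q_trans: "(a, b) \<in> Q\<^sup>= \<Longrightarrow> (b, c) \<in> Q\<^sup>= \<Longrightarrow> (a, c) \<in> Q\<^sup>="
  using trans_Q unfolding trans_def by blast

lemma envy_path_extend_Q:
  "envy_path u v \<Longrightarrow> (v, z) \<in> Q \<Longrightarrow> envy_path u z"
  unfolding envy_path_def by (meson UnI1 reflcl_Q_trans)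

lemma envy_path_extend_envy:
  assumes path: "envy_path u y" and k: "k \<in> J" "y \<in> M k" "z \<in> E k"
  shows "envy_path u z"
proof -
  obtain kf kl w' w where stages: "kf \<in> J" "kl \<in> J" "kf \<le> kl"
    and w': "w' \<in> M kf" "(u, w') \<in> Q\<^sup>=" and w: "w \<in> E kl" "(w, y) \<in> Q\<^sup>="
    using path unfolding envy_path_def by blast
  have "w \<notin> E k" using fair k w by blast
  with w stages k have "kl < k" using envy_antimono by (meson not_le subsetD)
  then have "kf \<le> k" using stages by simp
  with stages k w' show ?thesis unfolding envy_path_def by blast
qed

lemma trancl_edges_cases:
  "(u, v) \<in> edges\<^sup>+ \<Longrightarrow> (u, v) \<in> Q \<or> envy_path u v"
proof (induction rule: trancl_induct)
  case (base v)
  then show ?case unfolding edges_def envy_path_def by blast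
next
  case (step y z)
  from \<open>(y, z) \<in> edges\<close> consider "(y, z) \<in> Q" | k where "k \<in> J" "y \<in> M k" "z \<in> E k"
    unfolding edges_def by blast
  then show ?case
  proof cases
    case 1
    with step.IH trans_Q show ?thesis using envy_path_extend_Q by (meson transD)
  next
    case (2 k)
    from step.IH show ?thesis
    proof
      assume "(u, y) \<in> Q"
      with 2 show ?thesis unfolding envy_path_def by blast
    next
      assume "envy_path u y"
      with 2 show ?thesis using envy_path_extend_envy by blast
    qed
  qed
qed

lemma not_envy_path_refl: "\<not> envy_path u u"
proof
  assume "envy_path u u"
  then obtain kf kl w' w where stages: "kf \<in> J" "kl \<in> J" "kf \<le> kl"
    and w': "w' \<in> M kf" "(u, w') \<in> Q\<^sup>=" and w: "w \<in> E kl" "(w, u) \<in> Q\<^sup>="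
    unfolding envy_path_def by blast
  have "w \<notin> E kf" using fair stages w' w reflcl_Q_trans by blast
  with envy_antimono stages w show False by blast
qed

theorem acyclic_edges: "acyclic edges"
  unfolding acyclic_def
  using trancl_edges_cases not_envy_path_refl irrefl_Q by (auto simp: irrefl_def)

end

lemma A_set_eq_Times:
  "A_set I P \<mu> s = {i \<in> I. \<mu> i = Some s} \<times> {j \<in> I. (Some s, \<mu> j) \<in> P j}"
  unfolding A_set_def by auto

lemma stable_no_envy_of_lower_priority:
  assumes "stable I S P q prio \<mu>" "s \<in> S" "z \<in> I" "w \<in> I" "\<mu> z = Some s"
    and "(w, z) \<in> (prio s)\<^sup>=" and "(Some s, Some s) \<notin> P w"
  shows "(Some s, \<mu> w) \<notin> P w"
proof
  assume envy: "(Some s, \<mu> w) \<in> P w"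
  with assms have "\<mu> w \<noteq> Some s" "(w, z) \<in> prio s" by auto
  with envy assms show False unfolding stable_def R_def by blast
qed

lemma pareto_dominates_preserves_envy:
  assumes "pareto_dominates I P \<mu>' \<mu>" "w \<in> I" "trans_on X (P w)"
    and "Some s \<in> X" "\<mu> w \<in> X" "\<mu>' w \<in> X" "(Some s, \<mu>' w) \<in> P w"
  shows "(Some s, \<mu> w) \<in> P w"
  using assms unfolding pareto_dominates_def R_def trans_on_def by metis

lemma partial_order_on'_imp_trans_irrefl:
  assumes "B \<subseteq> X \<times> X" "partial_order_on' X B"
  shows "trans B" and "irrefl B"
  using assms unfolding partial_order_on'_def asym_on_def trans_on_def trans_def irrefl_def
  by blast+

lemma stable_staged_envy:
  assumes "s \<in> S"
    and pref: "\<forall>i\<in>I. strict_total_order_on (insert None (Some ` S)) (P i)"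
    and prio: "prio s \<subseteq> I \<times> I" "partial_order_on' I (prio s)"
    and stable: "\<forall>k\<in>J. stable I S P q prio (\<mu> k)"
    and pareto: "\<forall>k\<in>J. \<forall>k'\<in>J. k < k' \<longrightarrow> pareto_dominates I P (\<mu> k') (\<mu> k)"
  shows "staged_envy (prio s) J (\<lambda>k. {i \<in> I. \<mu> k i = Some s})
           (\<lambda>k. {j \<in> I. (Some s, \<mu> k j) \<in> P j})"
proof
  show "trans (prio s)" "irrefl (prio s)"
    using partial_order_on'_imp_trans_irrefl prio by blast+
next
  fix k k' assume k: "k \<in> J" "k' \<in> J" "k \<le> k'"
  define X where "X = insert None (Some ` S)"
  have in_X: "\<mu> k i \<in> X" if "k \<in> J" "i \<in> I" for k i
  proof -
    have "is_matching I S q (\<mu> k)" using stable that unfolding stable_def by blast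
    with \<open>i \<in> I\<close> show ?thesis unfolding is_matching_def X_def by blast
  qed
  show "{j \<in> I. (Some s, \<mu> k' j) \<in> P j} \<subseteq> {j \<in> I. (Some s, \<mu> k j) \<in> P j}"
  proof (cases "k = k'")
    case False
    with k pareto have dom: "pareto_dominates I P (\<mu> k') (\<mu> k)" by auto
    show ?thesis
    proof safe
      fix j assume "j \<in> I" "(Some s, \<mu> k' j) \<in> P j"
      moreover have "trans_on X (P j)"
        using pref \<open>j \<in> I\<close> unfolding strict_total_order_on_def X_def by blast
      moreover have "Some s \<in> X" using \<open>s \<in> S\<close> unfolding X_def by blast
      ultimately show "(Some s, \<mu> k j) \<in> P j"
        using pareto_dominates_preserves_envy[OF dom] in_X k by blast
    qed
  qed simp
next
  fix k z w assume "k \<in> J" and z: "z \<in> {i \<in> I. \<mu> k i = Some s}" and wz: "(w, z) \<in> (prio s)\<^sup>="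
  show "w \<notin> {j \<in> I. (Some s, \<mu> k j) \<in> P j}"
  proof
    assume w: "w \<in> {j \<in> I. (Some s, \<mu> k j) \<in> P j}"
    then have "(Some s, Some s) \<notin> P w"
      using pref \<open>s \<in> S\<close> unfolding strict_total_order_on_def irrefl_on_def by blast
    with w z wz stable \<open>k \<in> J\<close> \<open>s \<in> S\<close> show False
      using stable_no_envy_of_lower_priority[of I S P q prio "\<mu> k" s z w] by blast
  qed
qed

theorem lemma2:
  fixes I :: "'i set" and S :: "'s set"
    and P :: "'i \<Rightarrow> ('s option \<times> 's option) set"
    and q :: "'s \<Rightarrow> nat"
    and prio :: "'s \<Rightarrow> ('i \<times> 'i) set"
    and \<mu> :: "nat \<Rightarrow> ('i,'s) matching"
    and K :: nat
  assumes "finite I" and "card I \<ge> 3" and "finite S"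
    and "\<forall>i\<in>I. strict_total_order_on (insert None (Some ` S)) (P i)"
    and "\<forall>s\<in>S. q s > 0"
    and "\<forall>s\<in>S. prio s \<subseteq> I \<times> I \<and> partial_order_on' I (prio s)"
    and "K \<ge> 1"
    and "\<forall>k\<in>{1..K}. stable I S P q prio (\<mu> k)"
    and "\<forall>k\<in>{1..K}. \<forall>k'\<in>{1..K}. k < k' \<longrightarrow> pareto_dominates I P (\<mu> k') (\<mu> k)"
  shows "\<forall>s\<in>S. asym_on I (prio s \<union> (\<Union>k\<in>{1..K}. A_set I P (\<mu> k) s))
              \<and> acyclic_on I (prio s \<union> (\<Union>k\<in>{1..K}. A_set I P (\<mu> k) s))"
proof
  fix s assume "s \<in> S"
  then interpret staged_envy "prio s" "{1..K}" "\<lambda>k. {i \<in> I. \<mu> k i = Some s}"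
      "\<lambda>k. {j \<in> I. (Some s, \<mu> k j) \<in> P j}"
    using stable_staged_envy[of s S I P prio "{1..K}" q \<mu>] assms(4,6,8,9) by simp
  have "edges = prio s \<union> (\<Union>k\<in>{1..K}. A_set I P (\<mu> k) s)"
    unfolding edges_def A_set_eq_Times ..
  with acyclic_edges show "asym_on I (prio s \<union> (\<Union>k\<in>{1..K}. A_set I P (\<mu> k) s))
      \<and> acyclic_on I (prio s \<union> (\<Union>k\<in>{1..K}. A_set I P (\<mu> k) s))"
    by (simp add: acyclic_imp_asym_on acyclic_imp_acyclic_on)
qed

end
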